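(* Let $E=\mathbb C/\Lambda$, $\Lambda=\mathbb Z\omega_1+\mathbb Z\omega_2$, $p_1,\dots,p_N\in E$ distinct, $\ell_i\in\mathbb N$, and suppose $\ell=\sum_i\ell_i$ is even. Then no solution $u$ of $\Delta u+e^u=4\pi\sum_{i=1}^N\ell_i\delta_{p_i}$ on $E$ is of type I, i.e. no developing map $f$ of a solution satisfies $f(z+\omega_1)=-f(z)$ and $f(z+\omega_2)=1/f(z)$.
   Context: A developing map of $u$ is a meromorphic function $f$ on $\mathbb C$ with $u=\log\frac{8|f'|^2}{(1+|f|^2)^2}$; it is unique up to $f\mapsto (pf-\bar q)/(qf+\bar p)$ with $\begin{pmatrix}p&-\bar q\\ q&\bar p\end{pmatrix}\in SU(2)$. *)

theory Defs
  imports "HOL-Complex_Analysis.Complex_Analysis"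
begin

definition lattice :: "complex \<Rightarrow> complex \<Rightarrow> complex set" where
  "lattice w1 w2 = {of_int m * w1 + of_int n * w2 | m n. True}"

definition C2_on :: "complex set \<Rightarrow> (complex \<Rightarrow> real) \<Rightarrow> bool" where
  "C2_on S u \<longleftrightarrow>
     (\<exists>(Du :: complex \<Rightarrow> complex \<Rightarrow>\<^sub>L real) (D2u :: complex \<Rightarrow> complex \<Rightarrow>\<^sub>L (complex \<Rightarrow>\<^sub>L real)).
        (\<forall>z\<in>S. (u has_derivative blinfun_apply (Du z)) (at z)) \<and>
        (\<forall>z\<in>S. (Du has_derivative blinfun_apply (D2u z)) (at z)) \<and>
        continuous_on S D2u)"

definition laplacian :: "(complex \<Rightarrow> real) \<Rightarrow> complex \<Rightarrow> real" where
  "laplacian u z =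
     frechet_derivative (\<lambda>w. frechet_derivative u (at w) 1) (at z) 1 +
     frechet_derivative (\<lambda>w. frechet_derivative u (at w) \<i>) (at z) \<i>"

text \<open>u (lifted to C) solves  Laplacian u + e^u = 4 pi sum_i l_i delta_{p_i}  on E = C/Lambda:
  u is Lambda-periodic, C^2 with  Laplacian u + e^u = 0  off the singular set
  {p_i} + Lambda, and near each p_i,  u - 2 l_i log|z - p_i|  stays bounded.\<close>
definition liouville_solution ::
  "complex \<Rightarrow> complex \<Rightarrow> nat \<Rightarrow> (nat \<Rightarrow> complex) \<Rightarrow> (nat \<Rightarrow> nat) \<Rightarrow> (complex \<Rightarrow> real) \<Rightarrow> bool" where
  "liouville_solution w1 w2 N p l u \<longleftrightarrow>
     (let S = {p i + w | i w. i < N \<and> w \<in> lattice w1 w2} in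
       (\<forall>z. u (z + w1) = u z \<and> u (z + w2) = u z) \<and>
       C2_on (- S) u \<and>
       (\<forall>z\<in>- S. laplacian u z + exp (u z) = 0) \<and>
       (\<forall>i<N. \<exists>r>0. \<exists>B. \<forall>z. 0 < cmod (z - p i) \<and> cmod (z - p i) < r \<longrightarrow>
            \<bar>u z - 2 * real (l i) * ln (cmod (z - p i))\<bar> \<le> B))"

definition developing_map :: "(complex \<Rightarrow> complex) \<Rightarrow> (complex \<Rightarrow> real) \<Rightarrow> bool" where
  "developing_map f u \<longleftrightarrow> f meromorphic_on UNIV \<and>
     (\<forall>\<^sub>\<approx>z. u z = ln (8 * (cmod (deriv f z))\<^sup>2 / (1 + (cmod (f z))\<^sup>2)\<^sup>2))"

definition type_I_map :: "complex \<Rightarrow> complex \<Rightarrow> (complex \<Rightarrow> complex) \<Rightarrow> bool" where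
  "type_I_map w1 w2 f \<longleftrightarrow>
     (\<forall>\<^sub>\<approx>z. f (z + w1) = - f z) \<and> (\<forall>\<^sub>\<approx>z. f (z + w2) = 1 / f z)"

end

(*
  Let g be a developing map of u with its removable singularities removed, and put H = g''/g'.
  The type I relations g(z + w1) = -g(z) and g(z + w2) = 1/g(z) give H(z + w1) = H(z) and
  H(z + w2) = H(z) - 2 g'(z)/g(z).  Integrating H around a period parallelogram whose boundary
  avoids the zeros and poles of g and g', one pair of opposite sides cancels and the other
  contributes twice the integral of g'/g from a to a + w1, an odd multiple of pi i because g
  changes sign along that side.  By the argument principle the total order of g' inside the
  parallelogram is odd.  On the other hand u = log (8 |g'|^2 / (1 + |g|^2)^2) behaves like
  2 l_i log |z - p_i| at p_i and is continuous elsewhere, which forces the order of g' to be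
  congruent to l_i mod 2 at p_i and to be even at every other point; hence the total order is
  congruent to l_1 + ... + l_N, which is even.
*)
theory Submission
  imports Defs
begin

section \<open>The order of the derivative of a developing map\<close>

definition developing_density :: "(complex \<Rightarrow> complex) \<Rightarrow> complex \<Rightarrow> real" where
  "developing_density f z = ln (8 * (cmod (deriv f z))\<^sup>2 / (1 + (cmod (f z))\<^sup>2)\<^sup>2)"

lemma not_eventually_abs_ln_norm_le:
  fixes c :: complex
  shows "\<not> (\<forall>\<^sub>F z in at c. \<bar>ln (cmod (z - c))\<bar> \<le> M)"
proof
  assume bounded: "\<forall>\<^sub>F z in at c. \<bar>ln (cmod (z - c))\<bar> \<le> M"
  have "\<forall>\<^sub>F z in at c. 0 < cmod (z - c) \<and> cmod (z - c) < exp (- \<bar>M\<bar> - 1)"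
    unfolding eventually_at by (intro exI[of _ "exp (- \<bar>M\<bar> - 1)"]) (auto simp: dist_norm)
  with bounded have "\<forall>\<^sub>F z in at c. False"
  proof eventually_elim
    case (elim z)
    then have "ln (cmod (z - c)) < - \<bar>M\<bar> - 1"
      by (metis ln_exp ln_less_cancel_iff exp_gt_zero)
    with elim show False by linarith
  qed
  then show False by simp
qed

lemma log_coefficient_unique:
  fixes \<phi> :: "complex \<Rightarrow> real" and e k :: real
  assumes "((\<lambda>z. \<phi> z - e * ln (cmod (z - c))) \<longlongrightarrow> L) (at c)"
    and "\<forall>\<^sub>F z in at c. \<bar>\<phi> z - k * ln (cmod (z - c))\<bar> \<le> B"
  shows "e = k"
proof (rule ccontr)
  assume "e \<noteq> k"
  have "\<forall>\<^sub>F z in at c. \<bar>\<phi> z - e * ln (cmod (z - c)) - L\<bar> < 1"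
    using tendstoD[OF assms(1), of 1] by (simp add: dist_real_def)
  with assms(2) have "\<forall>\<^sub>F z in at c. \<bar>ln (cmod (z - c))\<bar> \<le> (B + \<bar>L\<bar> + 1) / \<bar>e - k\<bar>"
  proof eventually_elim
    case (elim z)
    define x where "x = ln (cmod (z - c))"
    have "(e - k) * x = (\<phi> z - k * x) - (\<phi> z - e * x - L) - L"
      by (simp add: algebra_simps)
    then have "\<bar>e - k\<bar> * \<bar>x\<bar> \<le> B + \<bar>L\<bar> + 1"
      using elim by (simp add: abs_mult[symmetric] x_def)
    then show ?case
      using \<open>e \<noteq> k\<close> by (simp add: x_def field_simps)
  qed
  then show False
    using not_eventually_abs_ln_norm_le by blast
qed

lemma eventually_norm_eq_zorder_factor:
  fixes h :: "complex \<Rightarrow> complex"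
  assumes "isolated_singularity_at h c" "not_essential h c" "\<exists>\<^sub>F z in at c. h z \<noteq> 0"
  shows "\<exists>K. isCont K c \<and> K c \<noteq> 0 \<and>
           (\<forall>\<^sub>F z in at c. cmod (h z) = cmod (K z) * cmod (z - c) powr of_int (zorder h c))"
proof -
  obtain r where Kc: "zor_poly h c c \<noteq> 0" and r: "r > 0"
    and Kh: "zor_poly h c holomorphic_on cball c r"
    and Keq: "\<And>w. w \<in> cball c r - {c} \<Longrightarrow> h w = zor_poly h c w * (w - c) powi zorder h c"
    using zorder_exist[OF assms] by blast
  have "isCont (zor_poly h c) c"
    using Kh r by (intro continuous_on_interior[of "cball c r"])
      (auto intro: holomorphic_on_imp_continuous_on)
  moreover have "\<forall>\<^sub>F z in at c. z \<in> ball c r - {c}"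
    using r by (intro eventually_at_in_open) auto
  then have "\<forall>\<^sub>F z in at c.
      cmod (h z) = cmod (zor_poly h c z) * cmod (z - c) powr of_int (zorder h c)"
    by eventually_elim (auto simp: Keq norm_mult norm_power_int powr_real_of_int')
  ultimately show ?thesis
    using Kc by blast
qed

lemma developing_density_asymptotics:
  fixes D G K H :: "complex \<Rightarrow> complex" and n :: real and m :: nat
  assumes K: "isCont K c" "K c \<noteq> 0" and H: "isCont H c" "m = 0 \<or> H c \<noteq> 0"
    and D_eq: "\<forall>\<^sub>F z in at c. cmod (D z) = cmod (K z) * cmod (z - c) powr n"
    and G_eq: "\<forall>\<^sub>F z in at c. cmod (G z) * cmod (z - c) ^ m = cmod (H z)"
  shows "((\<lambda>z. ln (8 * (cmod (D z))\<^sup>2 / (1 + (cmod (G z))\<^sup>2)\<^sup>2) - (2 * n + 4 * real m) * ln (cmod (z - c)))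
           \<longlongrightarrow> ln (8 * (cmod (K c))\<^sup>2 / (0 ^ (2 * m) + (cmod (H c))\<^sup>2)\<^sup>2)) (at c)"
proof -
  have denom: "0 ^ (2 * m) + (cmod (H c))\<^sup>2 \<noteq> (0::real)"
    using H(2) by (cases "m = 0") (auto simp: add_nonneg_eq_0_iff)
  have "((\<lambda>z. cmod (z - c)) \<longlongrightarrow> 0) (at c)"
    by (intro tendsto_norm_zero LIM_zero tendsto_ident_at)
  then have lim: "((\<lambda>z. ln (8 * (cmod (K z))\<^sup>2 / ((cmod (z - c)) ^ (2 * m) + (cmod (H z))\<^sup>2)\<^sup>2))
           \<longlongrightarrow> ln (8 * (cmod (K c))\<^sup>2 / (0 ^ (2 * m) + (cmod (H c))\<^sup>2)\<^sup>2)) (at c)"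
    using K H denom by (intro tendsto_intros) (auto simp: isCont_def)
  have "\<forall>\<^sub>F z in at c. K z \<noteq> 0"
    using K by (intro tendsto_imp_eventually_ne) (auto simp: isCont_def)
  moreover have "\<forall>\<^sub>F z in at c. z \<noteq> c"
    by (auto simp: eventually_at_filter)
  ultimately have "\<forall>\<^sub>F z in at c.
      ln (8 * (cmod (K z))\<^sup>2 / ((cmod (z - c)) ^ (2 * m) + (cmod (H z))\<^sup>2)\<^sup>2) =
      ln (8 * (cmod (D z))\<^sup>2 / (1 + (cmod (G z))\<^sup>2)\<^sup>2) - (2 * n + 4 * real m) * ln (cmod (z - c))"
    using D_eq G_eq
  proof eventually_elim
    case (elim z)
    define d where "d = cmod (z - c)"
    have d: "d > 0" using elim by (simp add: d_def)
    have D: "cmod (D z) = cmod (K z) * d powr n"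
      using elim by (simp add: d_def)
    have G: "cmod (G z) = cmod (H z) / d ^ m"
      using elim d by (simp add: d_def field_simps)
    define A where "A = 8 * (cmod (K z))\<^sup>2 / (d ^ (2 * m) + (cmod (H z))\<^sup>2)\<^sup>2"
    have A: "A > 0"
      using d elim by (auto simp: A_def intro!: divide_pos_pos zero_less_power add_pos_nonneg)
    have "8 * (cmod (D z))\<^sup>2 / (1 + (cmod (G z))\<^sup>2)\<^sup>2 = A * ((d powr n)\<^sup>2 * (d ^ m) ^ 4)"
      using d by (simp add: A_def D G field_simps power_mult power2_eq_square
          power4_eq_xxxx add_pos_nonneg)
    also have "ln \<dots> = ln A + (2 * n + 4 * m) * ln d"
      using d A by (simp add: ln_mult ln_realpow ln_powr algebra_simps)
    finally show ?case
      by (simp add: A_def d_def)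
  qed
  with lim show ?thesis
    by (rule Lim_transform_eventually)
qed

lemma zorder_deriv_parity:
  fixes g :: "complex \<Rightarrow> complex" and u :: "complex \<Rightarrow> real" and k :: nat
  assumes g: "g nicely_meromorphic_on UNIV" and nonconst: "\<exists>\<^sub>F z in at c. deriv g z \<noteq> 0"
    and u: "\<forall>\<^sub>F z in at c. u z = developing_density g z"
    and bounded: "\<forall>\<^sub>F z in at c. \<bar>u z - 2 * real k * ln (cmod (z - c))\<bar> \<le> B"
  shows "even (zorder (deriv g) c - int k)"
proof -
  have g_mero: "g meromorphic_on UNIV"
    using g by (simp add: nicely_meromorphic_on_def)
  then have "deriv g meromorphic_on UNIV"
    by (rule meromorphic_on_deriv)
  then obtain K where K: "isCont K c" "K c \<noteq> 0"
    and D_eq: "\<forall>\<^sub>F z in at c. cmod (deriv g z) = cmod (K z) * cmod (z - c) powr of_int (zorder (deriv g) c)"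
    using eventually_norm_eq_zorder_factor[OF _ _ nonconst] by (auto simp: meromorphic_on_altdef)
  obtain m :: nat and H where H: "isCont H c" "m = 0 \<or> H c \<noteq> 0"
    and G_eq: "\<forall>\<^sub>F z in at c. cmod (g z) * cmod (z - c) ^ m = cmod (H z)"
  proof (cases "is_pole g c")
    case False
    then have "isCont g c"
      using g by (intro analytic_at_imp_isCont nicely_meromorphic_on_imp_analytic_at) auto
    then show thesis
      by (intro that[of g 0]) auto
  next
    case True
    have sing: "isolated_singularity_at g c" "not_essential g c"
      using g_mero by (auto simp: meromorphic_on_altdef)
    moreover have "\<exists>\<^sub>F z in at c. g z \<noteq> 0"
      using True by (intro eventually_frequently)
        (auto simp: is_pole_def filterlim_at_infinity_imp_eventually_ne)
    ultimately obtain H where H: "isCont H c" "H c \<noteq> 0"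
      and "\<forall>\<^sub>F z in at c. cmod (g z) = cmod (H z) * cmod (z - c) powr of_int (zorder g c)"
      using eventually_norm_eq_zorder_factor by blast
    moreover have "zorder g c < 0"
      using isolated_pole_imp_neg_zorder[OF sing(1) True] .
    moreover have "\<forall>\<^sub>F z in at c. z \<noteq> c"
      by (auto simp: eventually_at_filter)
    ultimately have "\<forall>\<^sub>F z in at c. cmod (g z) * cmod (z - c) ^ nat (- zorder g c) = cmod (H z)"
    proof (elim eventually_rev_mp, intro always_eventually allI impI)
      fix z assume "z \<noteq> c" and g_eq: "cmod (g z) = cmod (H z) * cmod (z - c) powr of_int (zorder g c)"
      then have "cmod (z - c) ^ nat (- zorder g c) = cmod (z - c) powr - of_int (zorder g c)"
        using \<open>zorder g c < 0\<close> by (simp add: powr_realpow[symmetric])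
      then show "cmod (g z) * cmod (z - c) ^ nat (- zorder g c) = cmod (H z)"
        using \<open>z \<noteq> c\<close> by (simp add: g_eq powr_add[symmetric])
    qed
    with H show thesis
      by (intro that) auto
  qed
  define e where "e = 2 * real_of_int (zorder (deriv g) c) + 4 * real m"
  have "((\<lambda>z. developing_density g z - e * ln (cmod (z - c)))
          \<longlongrightarrow> ln (8 * (cmod (K c))\<^sup>2 / (0 ^ (2 * m) + (cmod (H c))\<^sup>2)\<^sup>2)) (at c)"
    using developing_density_asymptotics[OF K H D_eq G_eq] by (simp add: e_def developing_density_def)
  moreover have "\<forall>\<^sub>F z in at c. developing_density g z - e * ln (cmod (z - c)) = u z - e * ln (cmod (z - c))"
    using u by eventually_elim simp
  ultimately have "((\<lambda>z. u z - e * ln (cmod (z - c)))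
          \<longlongrightarrow> ln (8 * (cmod (K c))\<^sup>2 / (0 ^ (2 * m) + (cmod (H c))\<^sup>2)\<^sup>2)) (at c)"
    by (rule Lim_transform_eventually)
  from log_coefficient_unique[OF this bounded]
  have "zorder (deriv g) c + 2 * int m = int k"
    unfolding e_def by linarith
  then have "zorder (deriv g) c - int k = 2 * (- int m)"
    by simp
  then show ?thesis
    by simp
qed

lemma C2_on_imp_isCont: "C2_on S u \<Longrightarrow> z \<in> S \<Longrightarrow> isCont u z"
  unfolding C2_on_def by (meson has_derivative_continuous)

lemma even_zorder_deriv_if_isCont:
  fixes g :: "complex \<Rightarrow> complex"
  assumes "g nicely_meromorphic_on UNIV" "\<exists>\<^sub>F z in at c. deriv g z \<noteq> 0"
    and "\<forall>\<^sub>F z in at c. u z = developing_density g z" and "isCont u c"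
  shows "even (zorder (deriv g) c)"
proof -
  have "\<forall>\<^sub>F z in at c. dist (u z) (u c) < 1"
    using assms(4) by (intro tendstoD) (auto simp: isCont_def)
  then have "\<forall>\<^sub>F z in at c. \<bar>u z - 2 * real 0 * ln (cmod (z - c))\<bar> \<le> \<bar>u c\<bar> + 1"
    by eventually_elim (auto simp: dist_real_def)
  from zorder_deriv_parity[OF assms(1-3) this] show ?thesis
    by simp
qed

lemma developing_map_remove_sings:
  assumes "developing_map f u"
  shows "remove_sings f nicely_meromorphic_on UNIV"
    and "\<forall>\<^sub>F x in at z. u x = developing_density (remove_sings f) x"
proof -
  have f: "f meromorphic_on UNIV"
    using assms by (simp add: developing_map_def)
  then show "remove_sings f nicely_meromorphic_on UNIV"
    by (rule remove_sings_nicely_meromorphic)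
  have eq: "\<forall>\<^sub>F x in at z. remove_sings f x = f x" for z
    using f by (intro eventually_remove_sings_eq_at) (auto simp: meromorphic_on_altdef)
  have "\<forall>\<^sub>F x in at z. \<forall>\<^sub>F y in nhds x. remove_sings f y = f y"
  proof -
    obtain d where "d > 0" and d: "\<And>y. y \<noteq> z \<Longrightarrow> dist y z < d \<Longrightarrow> remove_sings f y = f y"
      using eq[of z] by (auto simp: eventually_at)
    have "\<forall>\<^sub>F x in at z. x \<in> ball z d - {z}"
      using \<open>d > 0\<close> by (intro eventually_at_in_open) auto
    then show ?thesis
    proof eventually_elim
      case (elim x)
      then show ?case
        unfolding eventually_nhds
        by (intro exI[of _ "ball z d - {z}"]) (auto simp: d dist_commute)
    qed
  qed
  then have "\<forall>\<^sub>F x in at z. deriv (remove_sings f) x = deriv f x"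
    by eventually_elim (rule deriv_cong_ev, auto)
  moreover have "\<forall>\<^sub>F x in at z. u x = ln (8 * (cmod (deriv f x))\<^sup>2 / (1 + (cmod (f x))\<^sup>2)\<^sup>2)"
    using assms eventually_cosparse_imp_eventually_at[of _ UNIV z] by (auto simp: developing_map_def)
  ultimately show "\<forall>\<^sub>F x in at z. u x = developing_density (remove_sings f) x"
    using eq[of z] by eventually_elim (simp add: developing_density_def)
qed

text \<open>Since \<open>ln 0 = 0\<close> in HOL, a developing map with \<open>deriv g = 0\<close> would make \<open>u\<close> vanish near
  a singular point, contradicting its logarithmic singularity there.\<close>
lemma deriv_nonzero_cosparse:
  fixes g :: "complex \<Rightarrow> complex" and k :: nat
  assumes g: "g meromorphic_on UNIV" and u: "\<forall>\<^sub>F z in at c. u z = developing_density g z"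
    and bounded: "\<exists>r>0. \<exists>B. \<forall>z. 0 < cmod (z - c) \<and> cmod (z - c) < r \<longrightarrow>
                    \<bar>u z - 2 * real k * ln (cmod (z - c))\<bar> \<le> B"
    and "k \<ge> 1"
  shows "\<forall>\<^sub>\<approx>z. deriv g z \<noteq> 0"
proof -
  have "deriv g meromorphic_on UNIV"
    using g by (rule meromorphic_on_deriv)
  then have "(\<forall>\<^sub>\<approx>z. deriv g z = 0) \<or> (\<forall>\<^sub>\<approx>z. deriv g z \<noteq> 0)"
    by (rule meromorphic_imp_constant_or_avoid) auto
  moreover have "\<not> (\<forall>\<^sub>\<approx>z. deriv g z = 0)"
  proof
    assume "\<forall>\<^sub>\<approx>z. deriv g z = 0"
    then have "\<forall>\<^sub>F z in at c. deriv g z = 0"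
      using eventually_cosparse_imp_eventually_at[of _ UNIV c] by simp
    moreover obtain r B where "r > 0" and B: "\<And>z. 0 < cmod (z - c) \<and> cmod (z - c) < r \<Longrightarrow>
        \<bar>u z - 2 * real k * ln (cmod (z - c))\<bar> \<le> B"
      using bounded by blast
    then have "\<forall>\<^sub>F z in at c. 0 < cmod (z - c) \<and> cmod (z - c) < r"
      unfolding eventually_at by (intro exI[of _ r]) (auto simp: dist_norm)
    ultimately have "\<forall>\<^sub>F z in at c. \<bar>ln (cmod (z - c))\<bar> \<le> B"
      using u
    proof eventually_elim
      case (elim z)
      then have "2 * real k * \<bar>ln (cmod (z - c))\<bar> \<le> B"
        using B[of z] by (simp add: developing_density_def abs_mult)
      moreover have "\<bar>ln (cmod (z - c))\<bar> \<le> 2 * real k * \<bar>ln (cmod (z - c))\<bar>"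
        using \<open>k \<ge> 1\<close> by (simp add: mult_le_cancel_right1)
      ultimately show ?case
        by linarith
    qed
    then show False
      using not_eventually_abs_ln_norm_le by blast
  qed
  ultimately show ?thesis
    by blast
qed

lemma zeros_poles_sparse:
  fixes g :: "complex \<Rightarrow> complex"
  assumes g: "g nicely_meromorphic_on UNIV" and deriv: "\<forall>\<^sub>\<approx>z. deriv g z \<noteq> 0"
  shows "{z. is_pole g z \<or> g z = 0 \<or> deriv g z = 0} sparse_in UNIV"
proof -
  have "(\<forall>z\<in>UNIV. g z = 0) \<or> (\<forall>\<^sub>\<approx>z. g z \<noteq> 0)"
    by (rule nicely_meromorphic_imp_constant_or_avoid[OF g]) auto
  moreover have "\<not> (\<forall>z. g z = 0)"
  proof
    assume "\<forall>z. g z = 0"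
    then have "g = (\<lambda>_. 0)"
      by auto
    with deriv have "\<forall>\<^sub>\<approx>z::complex. False"
      by simp
    then show False
      by (simp add: eventually_False cosparse_eq_bot_iff')
  qed
  ultimately have "\<forall>\<^sub>\<approx>z. g z \<noteq> 0"
    by blast
  moreover have "\<forall>\<^sub>\<approx>z. \<not> is_pole g z"
    using g by (intro meromorphic_on_imp_not_pole_cosparse) (simp add: nicely_meromorphic_on_def)
  ultimately have "\<forall>\<^sub>\<approx>z. \<not> (is_pole g z \<or> g z = 0 \<or> deriv g z = 0)"
    using deriv by eventually_elim auto
  then show ?thesis
    by (simp add: eventually_cosparse)
qed

section \<open>Shifted identities and their derivatives\<close>

lemma eventually_analytic_at_nhds:
  assumes "g analytic_on {z0}"
  shows "\<forall>\<^sub>F z in nhds z0. g analytic_on {z}"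
  using assms by (metis analytic_at eventually_nhds)

lemma eventually_deriv_shift_eq:
  fixes F G :: "complex \<Rightarrow> complex"
  assumes "\<forall>\<^sub>F z in nhds z0. F (z + w) = G z"
  shows "\<forall>\<^sub>F z in nhds z0. deriv F (z + w) = deriv G z"
proof -
  from assms have "\<forall>\<^sub>F z in nhds z0. \<forall>\<^sub>F y in nhds z. F (y + w) = G y"
    by (simp add: eventually_eventually)
  then show ?thesis
  proof eventually_elim
    case (elim z)
    have "deriv F (z + w) = deriv (\<lambda>y. F (y + w)) z"
      using deriv_shift_0[of F "z + w"] deriv_shift_0[of "\<lambda>y. F (y + w)" z]
      by (simp add: o_def add_ac)
    also have "\<dots> = deriv G z"
      by (rule deriv_cong_ev[OF elim refl])
    finally show ?case .
  qed
qed

lemma remove_sings_shift_identity: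
  fixes f \<phi> :: "complex \<Rightarrow> complex"
  defines "g \<equiv> remove_sings f"
  assumes f: "f meromorphic_on UNIV" and shift: "\<forall>\<^sub>\<approx>z. f (z + w) = \<phi> (f z)"
    and g: "g analytic_on {z0}" "g analytic_on {z0 + w}" and \<phi>: "isCont \<phi> (g z0)"
  shows "\<forall>\<^sub>F z in nhds z0. g (z + w) = \<phi> (g z)"
proof -
  have g_eq_f: "\<forall>\<^sub>F x in at z. g x = f x" for z
    unfolding g_def using f by (intro eventually_remove_sings_eq_at) (auto simp: meromorphic_on_altdef)
  have "filtermap (\<lambda>x. x + w) (at z0) = at (z0 + w)"
    using filtermap_at_shift[of "- w" z0] by simp
  then have "eventually (\<lambda>x. g x = f x) (filtermap (\<lambda>x. x + w) (at z0))"
    using g_eq_f[of "z0 + w"] by simp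
  then have "\<forall>\<^sub>F x in at z0. g (x + w) = f (x + w)"
    by (simp add: eventually_filtermap)
  moreover have "\<forall>\<^sub>F x in at z0. f (x + w) = \<phi> (f x)"
    using eventually_cosparse_imp_eventually_at[OF shift] by simp
  ultimately have punctured: "\<forall>\<^sub>F x in at z0. g (x + w) = \<phi> (g x)"
    using g_eq_f[of z0] by eventually_elim simp
  have "isCont (\<lambda>x. g (x + w)) z0"
    by (rule isCont_o2[where f = "\<lambda>x. x + w"]) (auto intro: continuous_intros analytic_at_imp_isCont g(2))
  moreover have "isCont (\<lambda>x. \<phi> (g x)) z0"
    by (rule isCont_o2[OF analytic_at_imp_isCont[OF g(1)] \<phi>])
  ultimately have "((\<lambda>x. \<phi> (g x)) \<longlongrightarrow> g (z0 + w)) (at z0)"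
    using punctured by (auto simp: isCont_def intro: Lim_transform_eventually)
  with \<open>isCont (\<lambda>x. \<phi> (g x)) z0\<close> have "g (z0 + w) = \<phi> (g z0)"
    by (auto simp: isCont_def intro: LIM_unique)
  with punctured show ?thesis
    by (simp add: eventually_nhds_conv_at)
qed

lemma type_I_map_remove_sings:
  fixes f :: "complex \<Rightarrow> complex"
  defines "g \<equiv> remove_sings f"
  assumes f: "f meromorphic_on UNIV" and type_I: "type_I_map w1 w2 f"
  shows "\<And>z. g analytic_on {z} \<Longrightarrow> g analytic_on {z + w1} \<Longrightarrow> \<forall>\<^sub>F x in nhds z. g (x + w1) = - g x"
    and "\<And>z. g analytic_on {z} \<Longrightarrow> g analytic_on {z + w2} \<Longrightarrow> g z \<noteq> 0 \<Longrightarrow>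
           \<forall>\<^sub>F x in nhds z. g (x + w2) = 1 / g x"
proof -
  have "isCont (\<lambda>x. - x) y" "y \<noteq> 0 \<Longrightarrow> isCont (\<lambda>x. 1 / x) y" for y :: complex
    by (simp_all add: isCont_minus isCont_divide)
  then show "\<And>z. g analytic_on {z} \<Longrightarrow> g analytic_on {z + w1} \<Longrightarrow> \<forall>\<^sub>F x in nhds z. g (x + w1) = - g x"
    and "\<And>z. g analytic_on {z} \<Longrightarrow> g analytic_on {z + w2} \<Longrightarrow> g z \<noteq> 0 \<Longrightarrow>
           \<forall>\<^sub>F x in nhds z. g (x + w2) = 1 / g x"
    using type_I unfolding g_def type_I_map_def by (auto intro!: remove_sings_shift_identity[OF f])
qed

lemma deriv_ratio_shift_of_antiperiodic:
  fixes g :: "complex \<Rightarrow> complex"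
  assumes shift: "\<forall>\<^sub>F z in nhds z0. g (z + w) = - g z" and g: "g analytic_on {z0}"
  shows "deriv (deriv g) (z0 + w) / deriv g (z0 + w) = deriv (deriv g) z0 / deriv g z0"
proof -
  have "\<forall>\<^sub>F z in nhds z0. deriv g (z + w) = deriv (\<lambda>z. - g z) z"
    by (rule eventually_deriv_shift_eq[OF shift])
  with eventually_analytic_at_nhds[OF g]
  have d1: "\<forall>\<^sub>F z in nhds z0. deriv g (z + w) = - deriv g z"
    by eventually_elim (simp add: analytic_on_imp_differentiable_at)
  have "deriv (deriv g) (z0 + w) = deriv (\<lambda>z. - deriv g z) z0"
    using eventually_nhds_x_imp_x[OF eventually_deriv_shift_eq[OF d1]] .
  also have "\<dots> = - deriv (deriv g) z0"
    using g by (intro deriv_minus analytic_on_imp_differentiable_at[of _ "{z0}"] analytic_deriv) auto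
  finally show ?thesis
    using eventually_nhds_x_imp_x[OF d1] by simp
qed

lemma deriv_ratio_shift_of_inverse_periodic:
  fixes g :: "complex \<Rightarrow> complex"
  assumes shift: "\<forall>\<^sub>F z in nhds z0. g (z + w) = 1 / g z" and g: "g analytic_on {z0}"
    and nonzero: "g z0 \<noteq> 0" "deriv g z0 \<noteq> 0"
  shows "deriv (deriv g) (z0 + w) / deriv g (z0 + w) =
           deriv (deriv g) z0 / deriv g z0 - 2 * deriv g z0 / g z0"
proof -
  have has_deriv: "(h has_field_derivative deriv h z) (at z)" if "h analytic_on {z}" for h :: "complex \<Rightarrow> complex" and z
    using that by (intro DERIV_deriv_iff_field_differentiable[THEN iffD2]
        analytic_on_imp_differentiable_at[of _ "{z}"]) auto
  have "isCont g z0"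
    using g by (rule analytic_at_imp_isCont)
  then have "\<forall>\<^sub>F z in at z0. g z \<noteq> 0"
    using nonzero(1) by (intro tendsto_imp_eventually_ne) (auto simp: isCont_def)
  then have "\<forall>\<^sub>F z in nhds z0. g z \<noteq> 0"
    using nonzero(1) by (simp add: eventually_nhds_conv_at)
  moreover have "\<forall>\<^sub>F z in nhds z0. deriv g (z + w) = deriv (\<lambda>z. 1 / g z) z"
    by (rule eventually_deriv_shift_eq[OF shift])
  ultimately have d1: "\<forall>\<^sub>F z in nhds z0. deriv g (z + w) = - deriv g z / (g z)\<^sup>2"
    using eventually_analytic_at_nhds[OF g]
  proof eventually_elim
    case (elim z)
    have "((\<lambda>z. 1 / g z) has_field_derivative - deriv g z / (g z)\<^sup>2) (at z)"
      using has_deriv[OF elim(3)] elim(1)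
      by (auto intro!: derivative_eq_intros simp: power2_eq_square field_simps)
    then show ?case
      using elim(2) by (simp add: DERIV_imp_deriv)
  qed
  have "((\<lambda>z. - deriv g z / (g z)\<^sup>2) has_field_derivative
          2 * (deriv g z0)\<^sup>2 / (g z0) ^ 3 - deriv (deriv g) z0 / (g z0)\<^sup>2) (at z0)"
    using has_deriv[OF g] has_deriv[OF analytic_deriv[OF g]] nonzero
    by (auto intro!: derivative_eq_intros simp: power2_eq_square power3_eq_cube field_simps)
  then have D2: "deriv (deriv g) (z0 + w) = 2 * (deriv g z0)\<^sup>2 / (g z0) ^ 3 - deriv (deriv g) z0 / (g z0)\<^sup>2"
    using eventually_nhds_x_imp_x[OF eventually_deriv_shift_eq[OF d1]] by (simp add: DERIV_imp_deriv)
  have D1: "deriv g (z0 + w) = - deriv g z0 / (g z0)\<^sup>2"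
    using eventually_nhds_x_imp_x[OF d1] .
  show ?thesis
    unfolding D1 D2 using nonzero by (simp add: field_simps power2_eq_square power3_eq_cube)
qed

section \<open>Contour integrals and winding numbers\<close>

lemma exp_contour_integral_logderiv:
  fixes g :: "complex \<Rightarrow> complex"
  assumes \<gamma>: "valid_path \<gamma>" and g: "g analytic_on path_image \<gamma>" "0 \<notin> g ` path_image \<gamma>"
  shows "g (pathfinish \<gamma>) = exp (contour_integral \<gamma> (\<lambda>z. deriv g z / g z)) * g (pathstart \<gamma>)"
proof -
  have g\<gamma>: "valid_path (g \<circ> \<gamma>)" "0 \<notin> path_image (g \<circ> \<gamma>)"
    using valid_path_compose_analytic[OF \<gamma> g(1)] g(2) by (auto simp: path_image_compose)
  have "contour_integral \<gamma> (\<lambda>z. deriv g z / g z) = contour_integral (g \<circ> \<gamma>) (\<lambda>w. 1 / (w - 0))"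
    using contour_integral_comp_analyticW[OF g(1) \<gamma>] by simp
  also have "\<dots> = 2 * pi * \<i> * winding_number (g \<circ> \<gamma>) 0"
    unfolding winding_number_valid_path[OF g\<gamma>] by simp
  finally show ?thesis
    using winding_number_exp_2pi[OF valid_path_imp_path[OF g\<gamma>(1)] g\<gamma>(2)]
    by (simp add: pathstart_compose pathfinish_compose)
qed

lemma contour_integral_logderiv_of_sign_change:
  fixes g :: "complex \<Rightarrow> complex"
  assumes "valid_path \<gamma>" "g analytic_on path_image \<gamma>" "0 \<notin> g ` path_image \<gamma>"
    and sign_change: "g (pathfinish \<gamma>) = - g (pathstart \<gamma>)"
  shows "\<exists>k::int. contour_integral \<gamma> (\<lambda>z. deriv g z / g z) = pi * \<i> * of_int (2 * k + 1)"
proof -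
  define I where "I = contour_integral \<gamma> (\<lambda>z. deriv g z / g z)"
  have "g (pathstart \<gamma>) \<noteq> 0"
    using assms(3) pathstart_in_path_image[of \<gamma>] by force
  moreover have "exp I * g (pathstart \<gamma>) = - g (pathstart \<gamma>)"
    using exp_contour_integral_logderiv[OF assms(1-3)] sign_change by (simp add: I_def)
  ultimately have "exp I = exp (pi * \<i>)"
    by (metis exp_pi_i mult_minus1 mult_cancel_right)
  then obtain n :: int where "I = pi * \<i> + of_int (2 * n) * pi * \<i>"
    using exp_eq by blast
  then show ?thesis
    by (intro exI[of _ n]) (simp add: I_def algebra_simps)
qed

lemma contour_integral_linepath_translate:
  "contour_integral (linepath (x + w) (y + w)) H = contour_integral (linepath x y) (\<lambda>z. H (z + w))"
  using contour_integral_translate[of w "linepath x y" H] by (simp add: linepath_translate)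

lemma contour_integral_triangle:
  fixes H :: "complex \<Rightarrow> complex"
  assumes "continuous_on (closed_segment A B \<union> closed_segment B C \<union> closed_segment C A) H"
  shows "contour_integral (linepath A B +++ linepath B C +++ linepath C A) H =
           contour_integral (linepath A B) H + contour_integral (linepath B C) H -
           contour_integral (linepath A C) H"
proof -
  have cont: "continuous_on (closed_segment A B) H" "continuous_on (closed_segment B C) H"
    "continuous_on (closed_segment C A) H"
    by (auto intro: continuous_on_subset[OF assms])
  then have int: "H contour_integrable_on linepath A B" "H contour_integrable_on linepath B C"
    "H contour_integrable_on linepath C A"
    by (auto intro: contour_integrable_continuous_linepath)
  then have "contour_integral (linepath A B +++ linepath B C +++ linepath C A) H =
      contour_integral (linepath A B) H + contour_integral (linepath B C) H + contour_integral (linepath C A) H"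
    by (simp add: contour_integrable_joinI add.assoc)
  also have "contour_integral (linepath C A) H = - contour_integral (linepath A C) H"
    by (rule contour_integral_reverse_linepath[OF cont(3)])
  finally show ?thesis
    by simp
qed

lemma winding_number_triangle_parity:
  fixes A B C p :: complex
  assumes "p \<notin> closed_segment A B" "p \<notin> closed_segment B C" "p \<notin> closed_segment C A"
  shows "\<exists>n::int. winding_number (linepath A B +++ linepath B C +++ linepath C A) p = of_int n \<and>
            (odd n \<longleftrightarrow> p \<in> convex hull {A, B, C})"
proof (cases "p \<in> convex hull {A, B, C}")
  case True
  then have "p \<in> interior (convex hull {A, B, C})"
    using assms by (simp add: interior_of_triangle)
  from winding_number_triangle[OF this] True show ?thesis
    by (intro exI[of _ "if 0 < Im ((B - A) * cnj (B - p)) then 1 else - 1"]) auto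
next
  case False
  have "path_image (linepath A B +++ linepath B C +++ linepath C A) \<subseteq> convex hull {A, B, C}"
    by (auto simp: path_image_join segment_convex_hull intro!: hull_mono)
  then have "winding_number (linepath A B +++ linepath B C +++ linepath C A) p = 0"
    using False by (intro winding_number_zero_outside[OF _ convex_convex_hull]) auto
  then show ?thesis
    using False by (intro exI[of _ 0]) auto
qed

lemma argument_principle_deriv:
  fixes g :: "complex \<Rightarrow> complex" and \<gamma> :: "real \<Rightarrow> complex" and R :: real
  defines "pz \<equiv> {z \<in> ball 0 R. deriv g z = 0 \<or> is_pole g z}"
  assumes g: "g nicely_meromorphic_on UNIV"
    and \<gamma>: "valid_path \<gamma>" "pathfinish \<gamma> = pathstart \<gamma>" "path_image \<gamma> \<subseteq> ball 0 R"
    and avoid: "\<And>z. z \<in> path_image \<gamma> \<Longrightarrow> g analytic_on {z} \<and> deriv g z \<noteq> 0"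
    and finite: "finite pz"
  shows "contour_integral \<gamma> (\<lambda>z. deriv (deriv g) z / deriv g z) =
           2 * pi * \<i> * (\<Sum>q\<in>pz. winding_number \<gamma> q * of_int (zorder (deriv g) q))"
proof -
  have "contour_integral \<gamma> (\<lambda>z. deriv (deriv g) z * 1 / deriv g z) =
      2 * pi * \<i> * (\<Sum>q\<in>{w \<in> ball 0 R. deriv g w = 0 \<or> w \<in> {z. is_pole g z}}.
        winding_number \<gamma> q * 1 * of_int (zorder (deriv g) q))"
  proof (rule argument_principle)
    have "deriv g analytic_on {z}" if "\<not> is_pole g z" for z
      using nicely_meromorphic_on_imp_analytic_at[OF g] that by (auto intro: analytic_deriv)
    then show "deriv g holomorphic_on ball 0 R - {z. is_pole g z}"
      by (intro analytic_imp_holomorphic analytic_on_analytic_at[THEN iffD2]) auto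
    show "path_image \<gamma> \<subseteq> ball 0 R - {w \<in> ball 0 R. deriv g w = 0 \<or> w \<in> {z. is_pole g z}}"
      using \<gamma>(3) avoid analytic_at_imp_no_pole by fastforce
    show "\<forall>z. z \<notin> ball 0 R \<longrightarrow> winding_number \<gamma> z = 0"
      using \<gamma> by (auto intro!: winding_number_zero_outside[of \<gamma> "ball 0 R"] valid_path_imp_path)
    have "isolated_singularity_at g q" for q
      using g by (auto simp: nicely_meromorphic_on_def meromorphic_on_altdef)
    then show "\<forall>q\<in>ball 0 R \<inter> {z. is_pole g z}. is_pole (deriv g) q"
      using is_pole_deriv by blast
  qed (use \<gamma> finite in \<open>auto simp: pz_def\<close>)
  then show ?thesis
    by (simp add: pz_def)
qed

lemma even_sum_minus_sum_odd_weights: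
  fixes n z :: "'a \<Rightarrow> int"
  assumes "finite A"
  shows "even ((\<Sum>q\<in>A. n q * z q) - (\<Sum>q\<in>{q\<in>A. odd (n q)}. z q))"
proof -
  have "(\<Sum>q\<in>{q\<in>A. odd (n q)}. z q) = (\<Sum>q\<in>A. if odd (n q) then z q else 0)"
    using assms by (simp add: sum.inter_filter)
  then have "(\<Sum>q\<in>A. n q * z q) - (\<Sum>q\<in>{q\<in>A. odd (n q)}. z q) =
      (\<Sum>q\<in>A. n q * z q - (if odd (n q) then z q else 0))"
    by (simp add: sum_subtractf)
  also have "even \<dots>"
  proof (intro dvd_sum)
    fix q
    show "even (n q * z q - (if odd (n q) then z q else 0))"
    proof (cases "odd (n q)")
      case True
      then have "even ((n q - 1) * z q)"
        by simp
      with True show ?thesis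
        by (simp add: algebra_simps)
    qed simp
  qed
  finally show ?thesis .
qed

lemma even_sum_diff_if_even_outside:
  fixes z :: "'a \<Rightarrow> int"
  assumes "finite A" "finite C" "\<And>q. q \<in> A - C \<Longrightarrow> even (z q)" "\<And>q. q \<in> C - A \<Longrightarrow> z q = 0"
  shows "even (sum z A - sum z C)"
proof -
  have "sum z A = sum z (A \<inter> C) + sum z (A - C)"
    by (rule sum.Int_Diff[OF assms(1)])
  moreover have "sum z C = sum z (A \<inter> C)"
    using assms(2,4) by (intro sum.mono_neutral_right) auto
  moreover have "even (sum z (A - C))"
    using assms(3) by (intro dvd_sum) auto
  ultimately show ?thesis
    by simp
qed

section \<open>Period lattices and parallelograms\<close>

lemma lattice_diff:
  assumes "v \<in> lattice w1 w2" "v' \<in> lattice w1 w2"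
  shows "v - v' \<in> lattice w1 w2"
proof -
  obtain m n m' n' where "v = of_int m * w1 + of_int n * w2" "v' = of_int m' * w1 + of_int n' * w2"
    using assms by (auto simp: lattice_def)
  then have "v - v' = of_int (m - m') * w1 + of_int (n - n') * w2"
    by (simp add: algebra_simps)
  then show ?thesis
    unfolding lattice_def by blast
qed

lemma zero_in_lattice: "0 \<in> lattice w1 w2"
  unfolding lattice_def by (rule CollectI, intro exI[of _ 0]) simp

lemma countable_lattice_translates:
  fixes p :: "nat \<Rightarrow> complex" and N :: nat
  shows "countable {p i + v | i v. i < N \<and> v \<in> lattice w1 w2}"
proof -
  have "{p i + v | i v. i < N \<and> v \<in> lattice w1 w2} \<subseteq>
      (\<lambda>(i, m, n). p i + (of_int m * w1 + of_int n * w2)) ` (UNIV :: (nat \<times> int \<times> int) set)"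
  proof
    fix z assume "z \<in> {p i + v | i v. i < N \<and> v \<in> lattice w1 w2}"
    then obtain i m n where "z = p i + (of_int m * w1 + of_int n * w2)"
      by (auto simp: lattice_def)
    then show "z \<in> (\<lambda>(i, m, n). p i + (of_int m * w1 + of_int n * w2)) ` UNIV"
      by (intro image_eqI[of _ _ "(i, m, n)"]) auto
  qed
  then show ?thesis
    by (rule countable_subset) simp
qed

lemma periodic_of_int:
  fixes u :: "complex \<Rightarrow> 'a"
  assumes "\<And>z. u (z + w) = u z"
  shows "u (z + of_int m * w) = u z"
proof -
  have nat: "u (z + of_nat n * w) = u z" for n z
  proof (induction n arbitrary: z)
    case (Suc n)
    have "u (z + of_nat (Suc n) * w) = u ((z + w) + of_nat n * w)"
      by (simp add: algebra_simps)
    then show ?case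
      using Suc assms by simp
  qed simp
  show ?thesis
  proof (cases "m \<ge> 0")
    case True
    then show ?thesis
      using nat[of z "nat m"] by simp
  next
    case False
    then have "u z = u ((z + of_int m * w) + of_nat (nat (- m)) * w)"
      by (simp add: algebra_simps)
    then show ?thesis
      using nat by simp
  qed
qed

lemma lattice_periodic:
  fixes u :: "complex \<Rightarrow> 'a"
  assumes "\<And>z. u (z + w1) = u z" "\<And>z. u (z + w2) = u z" and "v \<in> lattice w1 w2"
  shows "u (z + v) = u z"
proof -
  obtain m n where "v = of_int m * w1 + of_int n * w2"
    using assms(3) by (auto simp: lattice_def)
  then have "u (z + v) = u ((z + of_int m * w1) + of_int n * w2)"
    by (simp add: add.assoc)
  also have "\<dots> = u z"
    using periodic_of_int[of u, OF assms(2)] periodic_of_int[of u, OF assms(1)] by simp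
  finally show ?thesis .
qed
lemma eventually_log_bound_lattice_translate:
  fixes u :: "complex \<Rightarrow> real"
  assumes per: "\<And>z. u (z + w1) = u z" "\<And>z. u (z + w2) = u z" and v: "v \<in> lattice w1 w2"
    and bound: "r > 0" "\<And>z. 0 < cmod (z - c) \<and> cmod (z - c) < r \<Longrightarrow> \<bar>u z - k * ln (cmod (z - c))\<bar> \<le> B"
  shows "\<forall>\<^sub>F z in at (c + v). \<bar>u z - k * ln (cmod (z - (c + v)))\<bar> \<le> B"
  unfolding eventually_at
proof (intro exI[of _ r] conjI ballI impI)
  fix z assume z: "z \<noteq> c + v \<and> dist z (c + v) < r"
  have "u z = u ((z - v) + v)"
    by simp
  also have "\<dots> = u (z - v)"
    by (rule lattice_periodic[OF per v])
  finally show "\<bar>u z - k * ln (cmod (z - (c + v)))\<bar> \<le> B"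
    using bound(2)[of "z - v"] z by (simp add: dist_norm algebra_simps)
qed (use bound in auto)

locale lattice_basis =
  fixes w1 w2 :: complex
  assumes independent: "Im (w2 / w1) \<noteq> 0"
begin

definition coord2 :: "complex \<Rightarrow> real" where
  "coord2 z = Im (z / w1) / Im (w2 / w1)"

definition coord1 :: "complex \<Rightarrow> real" where
  "coord1 z = Re (z / w1) - coord2 z * Re (w2 / w1)"

lemma coord_add:
  "coord1 (z + z') = coord1 z + coord1 z'" "coord2 (z + z') = coord2 z + coord2 z'"
  by (simp_all add: coord1_def coord2_def add_divide_distrib field_simps)

lemma coord_diff:
  "coord1 (z - z') = coord1 z - coord1 z'" "coord2 (z - z') = coord2 z - coord2 z'"
  by (simp_all add: coord1_def coord2_def diff_divide_distrib field_simps)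

lemma coord_scale [simp]:
  "coord1 (of_real r * z) = r * coord1 z" "coord2 (of_real r * z) = r * coord2 z"
proof -
  have e: "of_real r * z / w1 = of_real r * (z / w1)"
    by simp
  have ri: "Re (of_real r * c) = r * Re c" "Im (of_real r * c) = r * Im c" for c :: complex
    by simp_all
  show "coord2 (of_real r * z) = r * coord2 z"
    unfolding coord2_def e ri by simp
  then show "coord1 (of_real r * z) = r * coord1 z"
    unfolding coord1_def e ri by (simp add: algebra_simps)
qed

lemma coord_of_int_scale [simp]:
  "coord1 (of_int m * z) = of_int m * coord1 z" "coord2 (of_int m * z) = of_int m * coord2 z"
  using coord_scale[of "of_int m" z] by simp_all

lemma coord_zero [simp]: "coord1 0 = 0" "coord2 0 = 0"
  by (simp_all add: coord1_def coord2_def)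

lemma coord_basis [simp]:
  "coord1 w1 = 1" "coord2 w1 = 0" "coord1 w2 = 0" "coord2 w2 = 1"
  "coord1 (w1 + w2) = 1" "coord2 (w1 + w2) = 1"
  using independent by (auto simp: coord1_def coord2_def add_divide_distrib)

lemma coord_lincomb [simp]:
  "coord1 (of_real s * w1 + of_real t * w2) = s" "coord2 (of_real s * w1 + of_real t * w2) = t"
  by (simp_all add: coord_add)

lemma coord_int_lincomb [simp]:
  "coord1 (of_int m * w1 + of_int n * w2) = of_int m" "coord2 (of_int m * w1 + of_int n * w2) = of_int n"
  using coord_lincomb[of "of_int m" "of_int n"] by simp_all

lemma coord_decomp: "z = of_real (coord1 z) * w1 + of_real (coord2 z) * w2"
proof -
  have "w1 \<noteq> 0"
    using independent by auto
  moreover have "c = of_real (Re c - Im c / Im t * Re t) + of_real (Im c / Im t) * t"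
    if "Im t \<noteq> 0" for c t :: complex
    using that by (simp add: complex_eq_iff)
  then have "z / w1 = of_real (coord1 z) + of_real (coord2 z) * (w2 / w1)"
    using independent unfolding coord1_def coord2_def by blast
  ultimately show ?thesis
    by (simp add: field_simps)
qed

lemma lattice_iff_coord_Ints: "v \<in> lattice w1 w2 \<longleftrightarrow> coord1 v \<in> \<int> \<and> coord2 v \<in> \<int>"
proof
  assume "v \<in> lattice w1 w2"
  then show "coord1 v \<in> \<int> \<and> coord2 v \<in> \<int>"
    by (auto simp: lattice_def coord_add)
next
  assume "coord1 v \<in> \<int> \<and> coord2 v \<in> \<int>"
  then obtain m n where "coord1 v = of_int m" "coord2 v = of_int n"
    by (auto elim!: Ints_cases)
  then have "v = of_int m * w1 + of_int n * w2"
    using coord_decomp[of v] by simp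
  then show "v \<in> lattice w1 w2"
    by (auto simp: lattice_def)
qed

definition parallelogram :: "complex \<Rightarrow> complex set" where
  "parallelogram a = {z. coord1 (z - a) \<in> {0..1} \<and> coord2 (z - a) \<in> {0..1}}"

definition open_parallelogram :: "complex \<Rightarrow> complex set" where
  "open_parallelogram a = {z. coord1 (z - a) \<in> {0<..<1} \<and> coord2 (z - a) \<in> {0<..<1}}"

text \<open>The boundary of a period parallelogram is handled as the two triangles on either side of
  its diagonal, because winding numbers of triangles are available; the two traversals of the
  diagonal cancel.\<close>
definition lower_triangle :: "complex \<Rightarrow> real \<Rightarrow> complex" where
  "lower_triangle a = linepath a (a + w1) +++ linepath (a + w1) (a + w1 + w2) +++ linepath (a + w1 + w2) a"

definition upper_triangle :: "complex \<Rightarrow> real \<Rightarrow> complex" where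
  "upper_triangle a = linepath a (a + w1 + w2) +++ linepath (a + w1 + w2) (a + w2) +++ linepath (a + w2) a"

text \<open>A point is generic for the base point \<open>a\<close> if it lies on no lattice translate of an edge
  of the two triangles.\<close>
definition generic :: "complex \<Rightarrow> complex \<Rightarrow> bool" where
  "generic a z \<longleftrightarrow> coord1 (z - a) \<notin> \<int> \<and> coord2 (z - a) \<notin> \<int> \<and> coord1 (z - a) - coord2 (z - a) \<notin> \<int>"

lemma coord_convex_combination:
  assumes "p = (1 - u) *\<^sub>R x + u *\<^sub>R y"
  shows "coord1 (p - a) = (1 - u) * coord1 (x - a) + u * coord1 (y - a)"
    and "coord2 (p - a) = (1 - u) * coord2 (x - a) + u * coord2 (y - a)"
proof -
  have p: "p - a = of_real (1 - u) * (x - a) + of_real u * (y - a)"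
    using assms by (simp add: scaleR_conv_of_real algebra_simps)
  show "coord1 (p - a) = (1 - u) * coord1 (x - a) + u * coord1 (y - a)"
    and "coord2 (p - a) = (1 - u) * coord2 (x - a) + u * coord2 (y - a)"
    unfolding p coord_add coord_scale by (rule refl)+
qed

lemma convex_parallelogram: "convex (parallelogram a)"
  unfolding convex_alt
proof (intro ballI allI impI)
  fix x y and u :: real
  assume "x \<in> parallelogram a" "y \<in> parallelogram a" "0 \<le> u \<and> u \<le> 1"
  then show "(1 - u) *\<^sub>R x + u *\<^sub>R y \<in> parallelogram a"
    unfolding parallelogram_def using coord_convex_combination[OF refl, of u x y a]
    by (auto intro!: convex_bound_le[of _ 1 _ "1 - u" u] add_nonneg_nonneg mult_nonneg_nonneg)
qed

lemma open_parallelogram_subset: "open_parallelogram a \<subseteq> parallelogram a"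
  by (auto simp: open_parallelogram_def parallelogram_def)

lemma parallelogram_vertices:
  "a \<in> parallelogram a" "a + w1 \<in> parallelogram a" "a + w2 \<in> parallelogram a"
  "a + w1 + w2 \<in> parallelogram a"
  by (simp_all add: parallelogram_def)

lemma triangle_images_subset_parallelogram:
  "path_image (lower_triangle a) \<subseteq> parallelogram a" "path_image (upper_triangle a) \<subseteq> parallelogram a"
  using closed_segment_subset[OF _ _ convex_parallelogram] parallelogram_vertices
  by (simp_all add: lower_triangle_def upper_triangle_def path_image_join)

lemma parallelogram_subset_cball: "parallelogram a \<subseteq> cball 0 (norm a + norm w1 + norm w2)"
proof
  fix z assume "z \<in> parallelogram a"
  then have st: "coord1 (z - a) \<in> {0..1}" "coord2 (z - a) \<in> {0..1}"
    by (auto simp: parallelogram_def)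
  have "z = a + of_real (coord1 (z - a)) * w1 + of_real (coord2 (z - a)) * w2"
    using coord_decomp[of "z - a"] by (simp add: algebra_simps)
  also have "norm \<dots> \<le> norm a + norm w1 + norm w2"
    using st by (intro norm_triangle_le add_mono) (auto simp: norm_mult mult_left_le_one_le)
  finally show "z \<in> cball 0 (norm a + norm w1 + norm w2)"
    by simp
qed

lemma closed_segment_coord_const:
  assumes "p \<in> closed_segment x y"
  shows "coord1 (x - a) = k \<Longrightarrow> coord1 (y - a) = k \<Longrightarrow> coord1 (p - a) = k"
    and "coord2 (x - a) = k \<Longrightarrow> coord2 (y - a) = k \<Longrightarrow> coord2 (p - a) = k"
    and "coord1 (x - a) - coord2 (x - a) = k \<Longrightarrow> coord1 (y - a) - coord2 (y - a) = k \<Longrightarrow>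
           coord1 (p - a) - coord2 (p - a) = k"
proof -
  obtain u where "p = (1 - u) *\<^sub>R x + u *\<^sub>R y"
    using assms by (auto simp: closed_segment_def)
  note coords = coord_convex_combination[OF this, of a]
  have diff: "coord1 (p - a) - coord2 (p - a) =
      (1 - u) * (coord1 (x - a) - coord2 (x - a)) + u * (coord1 (y - a) - coord2 (y - a))"
    unfolding coords by (simp add: algebra_simps)
  show "coord1 (x - a) = k \<Longrightarrow> coord1 (y - a) = k \<Longrightarrow> coord1 (p - a) = k"
    and "coord2 (x - a) = k \<Longrightarrow> coord2 (y - a) = k \<Longrightarrow> coord2 (p - a) = k"
    and "coord1 (x - a) - coord2 (x - a) = k \<Longrightarrow> coord1 (y - a) - coord2 (y - a) = k \<Longrightarrow>
           coord1 (p - a) - coord2 (p - a) = k"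
    unfolding diff coords by (simp_all add: algebra_simps)
qed

lemma generic_not_in_triangle_images:
  assumes "generic a p"
  shows "p \<notin> path_image (lower_triangle a) \<union> path_image (upper_triangle a)"
proof -
  note const = closed_segment_coord_const[of p _ _ a]
  have "p \<notin> closed_segment a (a + w1)"
    using assms const(2)[of a "a + w1" 0] by (auto simp: generic_def)
  moreover have "p \<notin> closed_segment (a + w1) (a + w1 + w2)"
    using assms const(1)[of "a + w1" "a + w1 + w2" 1] by (auto simp: generic_def)
  moreover have "p \<notin> closed_segment (a + w1 + w2) a"
    using assms const(3)[of "a + w1 + w2" a 0] by (auto simp: generic_def)
  moreover have "p \<notin> closed_segment (a + w1 + w2) (a + w2)"
    using assms const(2)[of "a + w1 + w2" "a + w2" 1] by (auto simp: generic_def)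
  moreover have "p \<notin> closed_segment (a + w2) a"
    using assms const(1)[of "a + w2" a 0] by (auto simp: generic_def)
  ultimately show ?thesis
    by (auto simp: lower_triangle_def upper_triangle_def path_image_join closed_segment_commute)
qed

lemma convex_hull_lower_triangle_iff:
  "p \<in> convex hull {a, a + w1, a + w1 + w2} \<longleftrightarrow>
     0 \<le> coord2 (p - a) \<and> coord2 (p - a) \<le> coord1 (p - a) \<and> coord1 (p - a) \<le> 1"
proof
  assume "p \<in> convex hull {a, a + w1, a + w1 + w2}"
  then obtain r s t where rst: "0 \<le> r" "0 \<le> s" "0 \<le> t" "r + s + t = 1"
    and p: "p = r *\<^sub>R a + s *\<^sub>R (a + w1) + t *\<^sub>R (a + w1 + w2)"
    by (auto simp: convex_hull_3)
  have "p - a = of_real (r + s + t) * a - a + of_real (s + t) * w1 + of_real t * w2"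
    using p by (simp add: scaleR_conv_of_real algebra_simps)
  then have pa: "p - a = of_real (s + t) * w1 + of_real t * w2"
    using rst(4) by simp
  show "0 \<le> coord2 (p - a) \<and> coord2 (p - a) \<le> coord1 (p - a) \<and> coord1 (p - a) \<le> 1"
    unfolding pa coord_lincomb using rst by linarith
next
  assume st: "0 \<le> coord2 (p - a) \<and> coord2 (p - a) \<le> coord1 (p - a) \<and> coord1 (p - a) \<le> 1"
  define s t where "s = coord1 (p - a)" and "t = coord2 (p - a)"
  have "p = a + of_real s * w1 + of_real t * w2"
    using coord_decomp[of "p - a"] by (simp add: s_def t_def algebra_simps)
  then have "p = (1 - s) *\<^sub>R a + (s - t) *\<^sub>R (a + w1) + t *\<^sub>R (a + w1 + w2)"
    by (simp add: scaleR_conv_of_real algebra_simps)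
  then show "p \<in> convex hull {a, a + w1, a + w1 + w2}"
    using st unfolding convex_hull_3 s_def[symmetric] t_def[symmetric]
    by (intro CollectI exI[of _ "1 - s"] exI[of _ "s - t"] exI[of _ t]) auto
qed

lemma convex_hull_upper_triangle_iff:
  "p \<in> convex hull {a, a + w1 + w2, a + w2} \<longleftrightarrow>
     0 \<le> coord1 (p - a) \<and> coord1 (p - a) \<le> coord2 (p - a) \<and> coord2 (p - a) \<le> 1"
proof
  assume "p \<in> convex hull {a, a + w1 + w2, a + w2}"
  then obtain r s t where rst: "0 \<le> r" "0 \<le> s" "0 \<le> t" "r + s + t = 1"
    and p: "p = r *\<^sub>R a + s *\<^sub>R (a + w1 + w2) + t *\<^sub>R (a + w2)"
    by (auto simp: convex_hull_3)
  have "p - a = of_real (r + s + t) * a - a + of_real s * w1 + of_real (s + t) * w2"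
    using p by (simp add: scaleR_conv_of_real algebra_simps)
  then have pa: "p - a = of_real s * w1 + of_real (s + t) * w2"
    using rst(4) by simp
  show "0 \<le> coord1 (p - a) \<and> coord1 (p - a) \<le> coord2 (p - a) \<and> coord2 (p - a) \<le> 1"
    unfolding pa coord_lincomb using rst by linarith
next
  assume st: "0 \<le> coord1 (p - a) \<and> coord1 (p - a) \<le> coord2 (p - a) \<and> coord2 (p - a) \<le> 1"
  define s t where "s = coord1 (p - a)" and "t = coord2 (p - a)"
  have "p = a + of_real s * w1 + of_real t * w2"
    using coord_decomp[of "p - a"] by (simp add: s_def t_def algebra_simps)
  then have "p = (1 - t) *\<^sub>R a + s *\<^sub>R (a + w1 + w2) + (t - s) *\<^sub>R (a + w2)"
    by (simp add: scaleR_conv_of_real algebra_simps)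
  then show "p \<in> convex hull {a, a + w1 + w2, a + w2}"
    using st unfolding convex_hull_3 s_def[symmetric] t_def[symmetric]
    by (intro CollectI exI[of _ "1 - t"] exI[of _ s] exI[of _ "t - s"]) auto
qed

lemma winding_number_triangles_parity:
  assumes "generic a p"
  shows "\<exists>n::int. winding_number (lower_triangle a) p + winding_number (upper_triangle a) p = of_int n \<and>
           (odd n \<longleftrightarrow> p \<in> open_parallelogram a)"
proof -
  have off: "p \<notin> path_image (lower_triangle a)" "p \<notin> path_image (upper_triangle a)"
    using generic_not_in_triangle_images[OF assms] by auto
  obtain n1 :: int where n1: "winding_number (lower_triangle a) p = of_int n1"
    "odd n1 \<longleftrightarrow> p \<in> convex hull {a, a + w1, a + w1 + w2}"
    using winding_number_triangle_parity[of p a "a + w1" "a + w1 + w2"] off(1)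
    by (auto simp: lower_triangle_def path_image_join)
  obtain n2 :: int where n2: "winding_number (upper_triangle a) p = of_int n2"
    "odd n2 \<longleftrightarrow> p \<in> convex hull {a, a + w1 + w2, a + w2}"
    using winding_number_triangle_parity[of p a "a + w1 + w2" "a + w2"] off(2)
    by (auto simp: upper_triangle_def path_image_join)
  define c1 c2 where "c1 = coord1 (p - a)" and "c2 = coord2 (p - a)"
  have "c1 \<noteq> 0" "c1 \<noteq> 1" "c2 \<noteq> 0" "c2 \<noteq> 1" "c1 \<noteq> c2"
    using assms Ints_0 Ints_1 by (auto simp: generic_def c1_def c2_def)
  then have "((0 \<le> c2 \<and> c2 \<le> c1 \<and> c1 \<le> 1) \<noteq> (0 \<le> c1 \<and> c1 \<le> c2 \<and> c2 \<le> 1)) \<longleftrightarrow>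
      (0 < c1 \<and> c1 < 1 \<and> 0 < c2 \<and> c2 < 1)"
    by auto
  then have "odd (n1 + n2) \<longleftrightarrow> p \<in> open_parallelogram a"
    unfolding odd_add n1(2) n2(2) convex_hull_lower_triangle_iff convex_hull_upper_triangle_iff
    by (simp add: open_parallelogram_def c1_def c2_def)
  with n1(1) n2(1) show ?thesis
    by (intro exI[of _ "n1 + n2"]) simp
qed

lemma contour_integral_triangles_eq:
  fixes H G :: "complex \<Rightarrow> complex"
  assumes H: "continuous_on (path_image (lower_triangle a) \<union> path_image (upper_triangle a)) H"
    and G: "continuous_on (closed_segment a (a + w1)) G"
    and shift1: "\<And>z. z \<in> closed_segment a (a + w2) \<Longrightarrow> H (z + w1) = H z"
    and shift2: "\<And>z. z \<in> closed_segment a (a + w1) \<Longrightarrow> H (z + w2) = H z - 2 * G z"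
  shows "contour_integral (lower_triangle a) H + contour_integral (upper_triangle a) H =
           2 * contour_integral (linepath a (a + w1)) G"
proof -
  define b c d where "b = a + w1" and "c = a + w1 + w2" and "d = a + w2"
  have images: "path_image (lower_triangle a) = closed_segment a b \<union> closed_segment b c \<union> closed_segment c a"
    "path_image (upper_triangle a) = closed_segment a c \<union> closed_segment c d \<union> closed_segment d a"
    by (auto simp: lower_triangle_def upper_triangle_def path_image_join b_def c_def d_def)
  have lower: "contour_integral (lower_triangle a) H =
      contour_integral (linepath a b) H + contour_integral (linepath b c) H - contour_integral (linepath a c) H"
    unfolding lower_triangle_def b_def c_def
    by (intro contour_integral_triangle continuous_on_subset[OF H]) (auto simp: images b_def c_def)
  have upper: "contour_integral (upper_triangle a) H =
      contour_integral (linepath a c) H + contour_integral (linepath c d) H - contour_integral (linepath a d) H"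
    unfolding upper_triangle_def c_def d_def
    by (intro contour_integral_triangle continuous_on_subset[OF H]) (auto simp: images c_def d_def)
  have "contour_integral (linepath b c) H = contour_integral (linepath a d) (\<lambda>z. H (z + w1))"
    using contour_integral_linepath_translate[of a w1 d H] by (simp add: b_def c_def d_def algebra_simps)
  also have "\<dots> = contour_integral (linepath a d) H"
    using shift1 by (intro contour_integral_cong) (auto simp: d_def)
  finally have right: "contour_integral (linepath b c) H = contour_integral (linepath a d) H" .
  have cont_ab: "continuous_on (closed_segment a b) H"
    by (rule continuous_on_subset[OF H]) (auto simp: images)
  have integrable: "H contour_integrable_on linepath a b" "G contour_integrable_on linepath a b"
    using cont_ab G by (auto intro: contour_integrable_continuous_linepath simp: b_def)
  have "contour_integral (linepath c d) H = contour_integral (linepath b a) (\<lambda>z. H (z + w2))"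
    using contour_integral_linepath_translate[of b w2 a H] by (simp add: b_def c_def d_def algebra_simps)
  also have "\<dots> = contour_integral (linepath b a) (\<lambda>z. H z - 2 * G z)"
    using shift2 by (intro contour_integral_cong) (auto simp: b_def closed_segment_commute)
  also have "\<dots> = - contour_integral (linepath a b) (\<lambda>z. H z - 2 * G z)"
    using cont_ab G by (intro contour_integral_reverse_linepath continuous_on_diff continuous_on_mult
        continuous_on_const) (auto simp: b_def closed_segment_commute)
  also have "\<dots> = - contour_integral (linepath a b) H + 2 * contour_integral (linepath a b) G"
    using integrable by (simp add: contour_integral_diff contour_integral_lmul contour_integrable_lmul)
  finally have top: "contour_integral (linepath c d) H =
      - contour_integral (linepath a b) H + 2 * contour_integral (linepath a b) G" .
  show ?thesis
    unfolding lower upper right top by (simp add: b_def)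
qed

lemma generic_base_point_exists:
  assumes "countable X"
  obtains a where "\<And>z. z \<in> X \<Longrightarrow> generic a z"
proof -
  define bad where "bad = (\<Union>z\<in>X. range (\<lambda>n::int. coord1 z - of_int n) \<union> range (\<lambda>n::int. of_int n - coord2 z)
      \<union> range (\<lambda>n::int. (coord1 z - coord2 z - of_int n) / 2))"
  have "countable bad"
    using assms by (auto simp: bad_def)
  then obtain x where x: "x \<notin> bad"
    using uncountable_UNIV_real by (metis UNIV_eq_I)
  define a where "a = of_real x * (w1 - w2)"
  have "generic a z" if "z \<in> X" for z
  proof -
    have coords: "coord1 (z - a) = coord1 z - x" "coord2 (z - a) = coord2 z + x"
      by (simp_all add: a_def coord_diff)
    have "coord1 z - x \<notin> \<int>"
    proof
      assume "coord1 z - x \<in> \<int>"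
      then obtain n where "x = coord1 z - of_int n"
        by (auto elim!: Ints_cases simp: algebra_simps)
      with x that show False
        by (auto simp: bad_def)
    qed
    moreover have "coord2 z + x \<notin> \<int>"
    proof
      assume "coord2 z + x \<in> \<int>"
      then obtain n where "x = of_int n - coord2 z"
        by (auto elim!: Ints_cases simp: algebra_simps)
      with x that show False
        by (auto simp: bad_def)
    qed
    moreover have "coord1 z - x - (coord2 z + x) \<notin> \<int>"
    proof
      assume "coord1 z - x - (coord2 z + x) \<in> \<int>"
      then obtain n where "x = (coord1 z - coord2 z - of_int n) / 2"
        by (auto elim!: Ints_cases simp: algebra_simps)
      with x that show False
        by (auto simp: bad_def)
    qed
    ultimately show ?thesis
      by (simp add: generic_def coords)
  qed
  then show thesis
    using that by blast
qed

lemma lattice_translate_into_open_parallelogram: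
  assumes "generic a z"
  obtains v where "v \<in> lattice w1 w2" "z + v \<in> open_parallelogram a"
proof
  define v where "v = of_int (- \<lfloor>coord1 (z - a)\<rfloor>) * w1 + of_int (- \<lfloor>coord2 (z - a)\<rfloor>) * w2"
  show "v \<in> lattice w1 w2"
    unfolding lattice_def v_def by blast
  have e: "z + v - a = (z - a) + v"
    by simp
  have "coord1 v = - \<lfloor>coord1 (z - a)\<rfloor>" "coord2 v = - \<lfloor>coord2 (z - a)\<rfloor>"
    unfolding v_def coord_int_lincomb by simp_all
  then have "coord1 (z + v - a) = frac (coord1 (z - a))" "coord2 (z + v - a) = frac (coord2 (z - a))"
    unfolding e coord_add by (simp_all add: frac_def)
  moreover have "frac (coord1 (z - a)) \<noteq> 0" "frac (coord2 (z - a)) \<noteq> 0"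
    using assms by (simp_all add: generic_def)
  ultimately show "z + v \<in> open_parallelogram a"
    using frac_lt_1[of "coord1 (z - a)"] frac_lt_1[of "coord2 (z - a)"]
      frac_ge_0[of "coord1 (z - a)"] frac_ge_0[of "coord2 (z - a)"]
    by (auto simp: open_parallelogram_def)
qed

lemma open_parallelogram_lattice_eq:
  assumes "z \<in> open_parallelogram a" "z' \<in> open_parallelogram a" "z - z' \<in> lattice w1 w2"
  shows "z = z'"
proof -
  have "coord1 (z - z') \<in> \<int>" "coord2 (z - z') \<in> \<int>"
    using assms(3) by (simp_all add: lattice_iff_coord_Ints)
  moreover have "z - z' = (z - a) - (z' - a)"
    by simp
  then have "\<bar>coord1 (z - z')\<bar> < 1" "\<bar>coord2 (z - z')\<bar> < 1"
    using assms(1,2) by (auto simp: open_parallelogram_def coord_diff)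
  ultimately have "coord1 (z - z') = 0" "coord2 (z - z') = 0"
    by (simp_all add: Ints_nonzero_abs_less1)
  then show ?thesis
    using coord_decomp[of "z - z'"] by simp
qed

lemma contour_integral_triangles_logderiv_deriv:
  fixes g :: "complex \<Rightarrow> complex"
  assumes antiperiodic: "\<And>z. g analytic_on {z} \<Longrightarrow> g analytic_on {z + w1} \<Longrightarrow>
                           \<forall>\<^sub>F x in nhds z. g (x + w1) = - g x"
    and inverse_periodic: "\<And>z. g analytic_on {z} \<Longrightarrow> g analytic_on {z + w2} \<Longrightarrow> g z \<noteq> 0 \<Longrightarrow>
                           \<forall>\<^sub>F x in nhds z. g (x + w2) = 1 / g x"
    and edges: "\<And>z. z \<in> path_image (lower_triangle a) \<union> path_image (upper_triangle a) \<Longrightarrow>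
                  g analytic_on {z} \<and> g z \<noteq> 0 \<and> deriv g z \<noteq> 0"
  shows "\<exists>k::int. contour_integral (lower_triangle a) (\<lambda>z. deriv (deriv g) z / deriv g z) +
                   contour_integral (upper_triangle a) (\<lambda>z. deriv (deriv g) z / deriv g z) =
                   2 * pi * \<i> * of_int (2 * k + 1)"
proof -
  define H where "H = (\<lambda>z. deriv (deriv g) z / deriv g z)"
  define G where "G = (\<lambda>z. deriv g z / g z)"
  have segments: "closed_segment a (a + w1) \<subseteq> path_image (lower_triangle a)"
    "closed_segment (a + w1) (a + w1 + w2) \<subseteq> path_image (lower_triangle a)"
    "closed_segment a (a + w2) \<subseteq> path_image (upper_triangle a)"
    "closed_segment (a + w1 + w2) (a + w2) \<subseteq> path_image (upper_triangle a)"
    by (auto simp: lower_triangle_def upper_triangle_def path_image_join closed_segment_commute)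
  have isCont: "isCont H z" "isCont G z"
    if "z \<in> path_image (lower_triangle a) \<union> path_image (upper_triangle a)" for z
  proof -
    have "g analytic_on {z}" "g z \<noteq> 0" "deriv g z \<noteq> 0"
      using edges[OF that] by auto
    moreover have "isCont g z" "isCont (deriv g) z" "isCont (deriv (deriv g)) z"
      using \<open>g analytic_on {z}\<close> by (auto intro!: analytic_at_imp_isCont analytic_deriv)
    ultimately show "isCont H z" "isCont G z"
      unfolding H_def G_def by (auto intro!: isCont_divide)
  qed
  have shift1: "H (z + w1) = H z" if "z \<in> closed_segment a (a + w2)" for z
  proof -
    have "z + w1 \<in> (+) w1 ` closed_segment a (a + w2)"
      using that by (auto simp: add.commute)
    also have "\<dots> = closed_segment (w1 + a) (w1 + (a + w2))"
      by (rule closed_segment_translation[symmetric])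
    also have "\<dots> = closed_segment (a + w1) (a + w1 + w2)"
      by (simp add: add_ac)
    finally have "g analytic_on {z}" "g analytic_on {z + w1}"
      using that segments(2,3) edges by blast+
    then show ?thesis
      unfolding H_def by (intro deriv_ratio_shift_of_antiperiodic antiperiodic)
  qed
  have shift2: "H (z + w2) = H z - 2 * G z" if "z \<in> closed_segment a (a + w1)" for z
  proof -
    have "z + w2 \<in> (+) w2 ` closed_segment a (a + w1)"
      using that by (auto simp: add.commute)
    also have "\<dots> = closed_segment (w2 + a) (w2 + (a + w1))"
      by (rule closed_segment_translation[symmetric])
    also have "\<dots> = closed_segment (a + w1 + w2) (a + w2)"
      by (simp add: add_ac closed_segment_commute)
    finally have "g analytic_on {z}" "g analytic_on {z + w2}" "g z \<noteq> 0" "deriv g z \<noteq> 0"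
      using that segments(1,4) edges by blast+
    then have "deriv (deriv g) (z + w2) / deriv g (z + w2) =
        deriv (deriv g) z / deriv g z - 2 * deriv g z / g z"
      by (intro deriv_ratio_shift_of_inverse_periodic inverse_periodic)
    then show ?thesis
      by (simp add: H_def G_def)
  qed
  have "contour_integral (lower_triangle a) H + contour_integral (upper_triangle a) H =
      2 * contour_integral (linepath a (a + w1)) G"
  proof (rule contour_integral_triangles_eq[OF _ _ shift1 shift2])
    show "continuous_on (path_image (lower_triangle a) \<union> path_image (upper_triangle a)) H"
      by (intro continuous_at_imp_continuous_on ballI isCont(1))
    show "continuous_on (closed_segment a (a + w1)) G"
      using segments(1) by (intro continuous_at_imp_continuous_on ballI isCont(2)) blast
  qed
  moreover obtain k :: int where "contour_integral (linepath a (a + w1)) G = pi * \<i> * of_int (2 * k + 1)"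
  proof -
    have "g analytic_on closed_segment a (a + w1)"
      using edges segments(1) by (subst analytic_on_analytic_at) blast
    moreover have "0 \<notin> g ` closed_segment a (a + w1)"
      using edges segments(1) by force
    moreover have "g (a + w1) = - g a"
      using eventually_nhds_x_imp_x[OF antiperiodic[of a]] edges segments(1) by auto
    ultimately show thesis
      using contour_integral_logderiv_of_sign_change[of "linepath a (a + w1)" g] that
      by (auto simp: G_def)
  qed
  ultimately show ?thesis
    unfolding H_def by (intro exI[of _ k]) simp
qed

lemma finite_inter_parallelogram:
  assumes "Z sparse_in UNIV"
  shows "finite (Z \<inter> parallelogram a)"
proof -
  have "finite (cball 0 (norm a + norm w1 + norm w2) \<inter> Z)"
    by (rule sparse_in_compact_finite[OF sparse_in_subset[OF assms]]) auto
  then show ?thesis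
    by (rule finite_subset[rotated]) (use parallelogram_subset_cball[of a] in auto)
qed

lemma triangle_paths:
  "valid_path (lower_triangle a)" "pathfinish (lower_triangle a) = pathstart (lower_triangle a)"
  "valid_path (upper_triangle a)" "pathfinish (upper_triangle a) = pathstart (upper_triangle a)"
  by (simp_all add: lower_triangle_def upper_triangle_def valid_path_join)

lemma odd_sum_zorder_deriv:
  fixes g :: "complex \<Rightarrow> complex"
  defines "Z \<equiv> {z. is_pole g z \<or> g z = 0 \<or> deriv g z = 0}"
  assumes g: "g nicely_meromorphic_on UNIV"
    and antiperiodic: "\<And>z. g analytic_on {z} \<Longrightarrow> g analytic_on {z + w1} \<Longrightarrow>
                           \<forall>\<^sub>F x in nhds z. g (x + w1) = - g x"
    and inverse_periodic: "\<And>z. g analytic_on {z} \<Longrightarrow> g analytic_on {z + w2} \<Longrightarrow> g z \<noteq> 0 \<Longrightarrow>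
                           \<forall>\<^sub>F x in nhds z. g (x + w2) = 1 / g x"
    and sparse: "Z sparse_in UNIV" and generic: "\<And>z. z \<in> Z \<Longrightarrow> generic a z"
  shows "odd (\<Sum>q\<in>{q \<in> open_parallelogram a. deriv g q = 0 \<or> is_pole g q}. zorder (deriv g) q)"
proof -
  define R where "R = norm a + norm w1 + norm w2 + 1"
  define pz where "pz = {z \<in> ball 0 R. deriv g z = 0 \<or> is_pole g z}"
  have in_ball: "parallelogram a \<subseteq> ball 0 R"
    using parallelogram_subset_cball[of a] by (force simp: R_def)
  have "finite (Z \<inter> cball 0 R)"
    using sparse_in_compact_finite[OF sparse_in_subset[OF sparse, of "cball 0 R"]] by (auto simp: Int_commute)
  then have finite: "finite pz"
    by (rule finite_subset[rotated]) (auto simp: pz_def Z_def)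
  have edges: "g analytic_on {z} \<and> g z \<noteq> 0 \<and> deriv g z \<noteq> 0"
    if "z \<in> path_image (lower_triangle a) \<union> path_image (upper_triangle a)" for z
  proof -
    have "z \<notin> Z"
      using that generic generic_not_in_triangle_images by blast
    then show ?thesis
      using nicely_meromorphic_on_imp_analytic_at[OF g] by (auto simp: Z_def)
  qed
  obtain k :: int where k:
    "contour_integral (lower_triangle a) (\<lambda>z. deriv (deriv g) z / deriv g z) +
     contour_integral (upper_triangle a) (\<lambda>z. deriv (deriv g) z / deriv g z) = 2 * pi * \<i> * of_int (2 * k + 1)"
    using contour_integral_triangles_logderiv_deriv[OF antiperiodic inverse_periodic edges] by blast
  have images: "path_image (lower_triangle a) \<subseteq> ball 0 R" "path_image (upper_triangle a) \<subseteq> ball 0 R"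
    using triangle_images_subset_parallelogram in_ball by blast+
  have "\<forall>q\<in>pz. \<exists>n::int. winding_number (lower_triangle a) q + winding_number (upper_triangle a) q = of_int n \<and>
          (odd n \<longleftrightarrow> q \<in> open_parallelogram a)"
    using winding_number_triangles_parity generic by (auto simp: pz_def Z_def)
  then obtain n where n: "\<And>q. q \<in> pz \<Longrightarrow>
      winding_number (lower_triangle a) q + winding_number (upper_triangle a) q = of_int (n q)"
    "\<And>q. q \<in> pz \<Longrightarrow> odd (n q) \<longleftrightarrow> q \<in> open_parallelogram a"
    by metis
  have AP: "contour_integral \<gamma> (\<lambda>z. deriv (deriv g) z / deriv g z) =
      2 * pi * \<i> * (\<Sum>q\<in>pz. winding_number \<gamma> q * of_int (zorder (deriv g) q))"
    if "\<gamma> \<in> {lower_triangle a, upper_triangle a}" for \<gamma>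
    unfolding pz_def using that triangle_paths images edges finite[unfolded pz_def]
    by (intro argument_principle_deriv[OF g]) auto
  have "2 * pi * \<i> * of_int (2 * k + 1) =
      2 * pi * \<i> * (\<Sum>q\<in>pz. (winding_number (lower_triangle a) q + winding_number (upper_triangle a) q) *
        of_int (zorder (deriv g) q))"
    unfolding k[symmetric] AP[of "lower_triangle a", simplified] AP[of "upper_triangle a", simplified]
    by (simp add: distrib_left distrib_right sum.distrib)
  also have "\<dots> = 2 * pi * \<i> * of_int (\<Sum>q\<in>pz. n q * zorder (deriv g) q)"
    using n(1) by (simp cong: sum.cong)
  finally have "(of_int (2 * k + 1) :: complex) = of_int (\<Sum>q\<in>pz. n q * zorder (deriv g) q)"
    by (subst (asm) mult_cancel_left) simp
  then have "(\<Sum>q\<in>pz. n q * zorder (deriv g) q) = 2 * k + 1"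
    by (simp only: of_int_eq_iff)
  then have "odd (\<Sum>q\<in>{q\<in>pz. odd (n q)}. zorder (deriv g) q)"
    using even_sum_minus_sum_odd_weights[OF finite, of n "zorder (deriv g)"] by presburger
  moreover have "{q\<in>pz. odd (n q)} = {q\<in>pz. q \<in> open_parallelogram a}"
    using n(2) by blast
  moreover have "\<dots> = {q \<in> open_parallelogram a. deriv g q = 0 \<or> is_pole g q}"
    using open_parallelogram_subset[of a] in_ball by (auto simp: pz_def)
  ultimately show ?thesis
    by simp
qed

lemma lattice_representatives:
  fixes p :: "nat \<Rightarrow> complex" and N :: nat
  assumes generic: "\<And>i. i < N \<Longrightarrow> generic a (p i)"
    and distinct: "\<And>i j. i < N \<Longrightarrow> j < N \<Longrightarrow> i \<noteq> j \<Longrightarrow> p i - p j \<notin> lattice w1 w2"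
  shows "\<exists>rep. inj_on rep {..<N} \<and> (\<forall>i<N. rep i - p i \<in> lattice w1 w2) \<and>
           {p i + v | i v. i < N \<and> v \<in> lattice w1 w2} \<inter> open_parallelogram a = rep ` {..<N}"
proof -
  have "\<forall>i. \<exists>v. i < N \<longrightarrow> v \<in> lattice w1 w2 \<and> p i + v \<in> open_parallelogram a"
    using lattice_translate_into_open_parallelogram generic by metis
  then obtain v where v: "\<And>i. i < N \<Longrightarrow> v i \<in> lattice w1 w2 \<and> p i + v i \<in> open_parallelogram a"
    by metis
  define rep where "rep i = p i + v i" for i
  have "inj_on rep {..<N}"
  proof
    fix i j assume ij: "i \<in> {..<N}" "j \<in> {..<N}" and "rep i = rep j"
    then have "p i - p j = v j - v i"
      by (simp add: rep_def algebra_simps)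
    then have "p i - p j \<in> lattice w1 w2"
      using v ij by (simp add: lattice_diff)
    with distinct ij show "i = j"
      by blast
  qed
  moreover have "rep i - p i \<in> lattice w1 w2" if "i < N" for i
    using v that by (simp add: rep_def)
  moreover have "{p i + w | i w. i < N \<and> w \<in> lattice w1 w2} \<inter> open_parallelogram a = rep ` {..<N}"
  proof (intro equalityI subsetI)
    fix z assume "z \<in> {p i + w | i w. i < N \<and> w \<in> lattice w1 w2} \<inter> open_parallelogram a"
    then obtain i w where z: "z = p i + w" "i < N" "w \<in> lattice w1 w2" "z \<in> open_parallelogram a"
      by blast
    then have "z - rep i \<in> lattice w1 w2"
      using v lattice_diff by (simp add: rep_def)
    then have "z = rep i"
      using v z by (intro open_parallelogram_lattice_eq[of _ a]) (auto simp: rep_def)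
    with z(2) show "z \<in> rep ` {..<N}"
      by blast
  next
    fix z assume "z \<in> rep ` {..<N}"
    then show "z \<in> {p i + w | i w. i < N \<and> w \<in> lattice w1 w2} \<inter> open_parallelogram a"
      using v by (auto simp: rep_def)
  qed
  ultimately show ?thesis
    by (intro exI[of _ rep]) auto
qed

lemma even_sum_zorder_deriv_in_open_parallelogram:
  fixes g :: "complex \<Rightarrow> complex" and u :: "complex \<Rightarrow> real" and p :: "nat \<Rightarrow> complex"
    and l :: "nat \<Rightarrow> nat" and N :: nat
  defines "S \<equiv> {p i + v | i v. i < N \<and> v \<in> lattice w1 w2}"
  assumes g: "g nicely_meromorphic_on UNIV" and deriv_nonzero: "\<forall>\<^sub>\<approx>z. deriv g z \<noteq> 0"
    and density: "\<And>z. \<forall>\<^sub>F x in at z. u x = developing_density g x"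
    and per: "\<And>z. u (z + w1) = u z" "\<And>z. u (z + w2) = u z" and C2: "C2_on (- S) u"
    and sing: "\<And>i. i < N \<Longrightarrow> \<exists>r>0. \<exists>B. \<forall>z. 0 < cmod (z - p i) \<and> cmod (z - p i) < r \<longrightarrow>
                 \<bar>u z - 2 * real (l i) * ln (cmod (z - p i))\<bar> \<le> B"
    and distinct: "\<And>i j. i < N \<Longrightarrow> j < N \<Longrightarrow> i \<noteq> j \<Longrightarrow> p i - p j \<notin> lattice w1 w2"
    and generic: "\<And>i v. i < N \<Longrightarrow> v \<in> lattice w1 w2 \<Longrightarrow> generic a (p i + v)"
    and even_orders: "even (\<Sum>i<N. l i)"
  shows "even (\<Sum>q\<in>{q \<in> open_parallelogram a. deriv g q = 0 \<or> is_pole g q}. zorder (deriv g) q)"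
proof -
  define A where "A = {q \<in> open_parallelogram a. deriv g q = 0 \<or> is_pole g q}"
  have nonconst: "\<exists>\<^sub>F z in at q. deriv g z \<noteq> 0" for q
    using eventually_cosparse_imp_eventually_at[OF deriv_nonzero, of q]
    by (intro eventually_frequently) auto
  have "A \<subseteq> {z. is_pole g z \<or> g z = 0 \<or> deriv g z = 0} \<inter> parallelogram a"
    using open_parallelogram_subset[of a] by (auto simp: A_def)
  then have finite_A: "finite A"
    using finite_inter_parallelogram[OF zeros_poles_sparse[OF g deriv_nonzero]] by (rule finite_subset)
  have generic_p: "generic a (p i)" if "i < N" for i
    using generic[OF that zero_in_lattice] by simp
  obtain rep where "inj_on rep {..<N} \<and> (\<forall>i<N. rep i - p i \<in> lattice w1 w2) \<and>
      S \<inter> open_parallelogram a = rep ` {..<N}"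
    using lattice_representatives[OF generic_p distinct] unfolding S_def by (rule exE)
  note rep_props = this
  then have inj: "inj_on rep {..<N}"
    by (rule conjunct1)
  have S_cell: "S \<inter> open_parallelogram a = rep ` {..<N}"
    using rep_props by (rule conjunct2[THEN conjunct2])
  have rep: "rep i - p i \<in> lattice w1 w2" if "i < N" for i
    using rep_props that by blast
  have outside: "even (sum (zorder (deriv g)) A - sum (zorder (deriv g)) (rep ` {..<N}))"
  proof (rule even_sum_diff_if_even_outside[OF finite_A finite_imageI[OF finite_lessThan]])
    fix q assume "q \<in> A - rep ` {..<N}"
    then have "q \<notin> S"
      using S_cell by (auto simp: A_def)
    then show "even (zorder (deriv g) q)"
      using C2_on_imp_isCont[OF C2] by (intro even_zorder_deriv_if_isCont[OF g nonconst density]) auto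
  next
    fix q assume "q \<in> rep ` {..<N} - A"
    then have "deriv g q \<noteq> 0" "\<not> is_pole g q"
      using S_cell by (auto simp: A_def)
    then show "zorder (deriv g) q = 0"
      using nicely_meromorphic_on_imp_analytic_at[OF g] by (intro zorder_eq_0I analytic_deriv) auto
  qed
  have "even (zorder (deriv g) (rep i) - int (l i))" if i: "i < N" for i
  proof -
    obtain r B where "r > 0"
      and "\<And>z. 0 < cmod (z - p i) \<and> cmod (z - p i) < r \<Longrightarrow> \<bar>u z - 2 * real (l i) * ln (cmod (z - p i))\<bar> \<le> B"
      using sing[OF i] by blast
    from eventually_log_bound_lattice_translate[OF per rep[OF i] this]
    have "\<forall>\<^sub>F z in at (rep i). \<bar>u z - 2 * real (l i) * ln (cmod (z - rep i))\<bar> \<le> B"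
      by simp
    then show ?thesis
      by (rule zorder_deriv_parity[OF g nonconst density])
  qed
  then have reps: "even ((\<Sum>i<N. zorder (deriv g) (rep i)) - (\<Sum>i<N. int (l i)))"
    unfolding sum_subtractf[symmetric] by (intro dvd_sum) auto
  have orders: "even (\<Sum>i<N. int (l i))"
    using even_orders by (simp flip: of_nat_sum)
  have "sum (zorder (deriv g)) A = (sum (zorder (deriv g)) A - sum (zorder (deriv g)) (rep ` {..<N})) +
      ((\<Sum>i<N. zorder (deriv g) (rep i)) - (\<Sum>i<N. int (l i))) + (\<Sum>i<N. int (l i))"
    by (simp add: sum.reindex[OF inj])
  then show ?thesis
    unfolding A_def[symmetric] using outside reps orders by (metis dvd_add)
qed

end

theorem proposition4p5:
  fixes w1 w2 :: complex and N :: nat and p :: "nat \<Rightarrow> complex" and l :: "nat \<Rightarrow> nat"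
    and u :: "complex \<Rightarrow> real"
  assumes "Im (w2 / w1) \<noteq> 0"
    and "N \<ge> 1"
    and "\<forall>i<N. \<forall>j<N. i \<noteq> j \<longrightarrow> p i - p j \<notin> lattice w1 w2"
    and "\<forall>i<N. l i \<ge> 1"
    and "even (\<Sum>i<N. l i)"
    and "liouville_solution w1 w2 N p l u"
  shows "\<not> (\<exists>f. developing_map f u \<and> type_I_map w1 w2 f)"
proof
  assume "\<exists>f. developing_map f u \<and> type_I_map w1 w2 f"
  then obtain f where dev: "developing_map f u" and type_I: "type_I_map w1 w2 f"
    by blast
  interpret lattice_basis w1 w2
    by standard (rule assms(1))
  define S where "S = {p i + v | i v. i < N \<and> v \<in> lattice w1 w2}"
  define g where "g = remove_sings f"
  have per: "\<And>z. u (z + w1) = u z" "\<And>z. u (z + w2) = u z" and C2: "C2_on (- S) u"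
    and sing: "\<And>i. i < N \<Longrightarrow> \<exists>r>0. \<exists>B. \<forall>z. 0 < cmod (z - p i) \<and> cmod (z - p i) < r \<longrightarrow>
                 \<bar>u z - 2 * real (l i) * ln (cmod (z - p i))\<bar> \<le> B"
    using assms(6) by (simp_all add: liouville_solution_def Let_def S_def)
  have g: "g nicely_meromorphic_on UNIV" and density: "\<And>z. \<forall>\<^sub>F x in at z. u x = developing_density g x"
    unfolding g_def by (rule developing_map_remove_sings[OF dev])+
  have deriv_nonzero: "\<forall>\<^sub>\<approx>z. deriv g z \<noteq> 0"
    using g sing[of 0] assms(2,4)
    by (intro deriv_nonzero_cosparse[where c = "p 0" and k = "l 0", OF _ density])
      (auto simp: nicely_meromorphic_on_def)
  define Z where "Z = {z. is_pole g z \<or> g z = 0 \<or> deriv g z = 0}"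
  have sparse: "Z sparse_in UNIV"
    unfolding Z_def by (rule zeros_poles_sparse[OF g deriv_nonzero])
  then have "countable (Z \<union> S)"
    using sparse_imp_countable[OF open_UNIV] countable_lattice_translates by (simp add: S_def)
  then obtain a where generic: "\<And>z. z \<in> Z \<union> S \<Longrightarrow> generic a z"
    using generic_base_point_exists by blast
  have generic_S: "generic a (p i + v)" if "i < N" "v \<in> lattice w1 w2" for i v
    using generic that by (auto simp: S_def)
  have "odd (\<Sum>q\<in>{q \<in> open_parallelogram a. deriv g q = 0 \<or> is_pole g q}. zorder (deriv g) q)"
    using type_I_map_remove_sings[OF _ type_I] generic sparse dev
    by (intro odd_sum_zorder_deriv[OF g]) (auto simp: g_def Z_def developing_map_def)
  moreover have "even (\<Sum>q\<in>{q \<in> open_parallelogram a. deriv g q = 0 \<or> is_pole g q}. zorder (deriv g) q)"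
    using assms(3) C2 by (intro even_sum_zorder_deriv_in_open_parallelogram[OF g deriv_nonzero density per _
        sing _ generic_S assms(5)]) (auto simp: S_def)
  ultimately show False
    by simp
qed

end
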